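(* Let $R$ be a unique factorization domain of finite character and of Krull dimension $2$. Then every prime ideal of $R$ is radically perfect.
   Context: All rings are commutative with identity. A ring $R$ is of finite character if every nonzero element of $R$ is contained in only finitely many maximal ideals. An ideal $I$ of $R$ is called radically perfect if $\mathrm{ht}(I)=\inf\{n \mid \sqrt{I}=\sqrt{(\theta_1,\dots,\theta_n)} \text{ for some } \theta_1,\dots,\theta_n\in R\}$, and moreover, if $\mathrm{ht}(I)=0$, then $\sqrt{I}=\sqrt{(\theta)}$ for some zero divisor $\theta$ of $R$. *)

theory Defs
  imports "HOL-Computational_Algebra.Factorial_Ring" "HOL-Library.Extended_Nat"
begin

definition is_ideal :: "'a::comm_ring_1 set \<Rightarrow> bool" where
  "is_ideal I \<longleftrightarrow> 0 \<in> I \<and> (\<forall>x\<in>I. \<forall>y\<in>I. x + y \<in> I) \<and> (\<forall>r. \<forall>x\<in>I. r * x \<in> I)"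

definition prime_ideal :: "'a::comm_ring_1 set \<Rightarrow> bool" where
  "prime_ideal P \<longleftrightarrow> is_ideal P \<and> P \<noteq> UNIV \<and> (\<forall>a b. a * b \<in> P \<longrightarrow> a \<in> P \<or> b \<in> P)"

definition maximal_ideal :: "'a::comm_ring_1 set \<Rightarrow> bool" where
  "maximal_ideal M \<longleftrightarrow> is_ideal M \<and> M \<noteq> UNIV \<and>
     (\<forall>J. is_ideal J \<and> M \<subseteq> J \<longrightarrow> J = M \<or> J = UNIV)"

definition ideal_gen :: "'a::comm_ring_1 set \<Rightarrow> 'a set" where
  "ideal_gen S = \<Inter>{J. is_ideal J \<and> S \<subseteq> J}"

definition radical :: "'a::comm_ring_1 set \<Rightarrow> 'a set" where
  "radical I = {x. \<exists>n. x ^ n \<in> I}"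

definition zero_divisor :: "'a::comm_ring_1 \<Rightarrow> bool" where
  "zero_divisor a \<longleftrightarrow> (\<exists>b. b \<noteq> 0 \<and> a * b = 0)"

definition prime_chain :: "nat \<Rightarrow> (nat \<Rightarrow> 'a::comm_ring_1 set) \<Rightarrow> bool" where
  "prime_chain n f \<longleftrightarrow> (\<forall>i\<le>n. prime_ideal (f i)) \<and> (\<forall>i<n. f i \<subset> f (Suc i))"

definition prime_height :: "'a::comm_ring_1 set \<Rightarrow> enat" where
  "prime_height P = Sup {enat n | n. \<exists>f. prime_chain n f \<and> f n = P}"

definition ideal_height :: "'a::comm_ring_1 set \<Rightarrow> enat" where
  "ideal_height I = Inf {prime_height P | P. prime_ideal P \<and> I \<subseteq> P}"

definition krull_dim :: "'a::comm_ring_1 itself \<Rightarrow> enat" where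
  "krull_dim _ = Sup {enat n | n. \<exists>f::nat \<Rightarrow> 'a set. prime_chain n f}"

definition finite_character :: "'a::comm_ring_1 itself \<Rightarrow> bool" where
  "finite_character _ \<longleftrightarrow>
     (\<forall>x::'a. x \<noteq> 0 \<longrightarrow> finite {M. maximal_ideal M \<and> x \<in> M})"

definition radically_perfect :: "'a::comm_ring_1 set \<Rightarrow> bool" where
  "radically_perfect I \<longleftrightarrow>
     ideal_height I = Inf {enat n | n. \<exists>\<theta>::nat \<Rightarrow> 'a.
                              radical I = radical (ideal_gen (\<theta> ` {..<n}))} \<and>
     (ideal_height I = 0 \<longrightarrow> (\<exists>\<theta>. zero_divisor \<theta> \<and> radical I = radical (ideal_gen {\<theta>})))"

end

theory Submission
  imports Defs
begin

text \<open>
  Every nonzero prime P of a UFD contains a prime element p. Hence either P = 0 (height 0, no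
  generators needed), or P = (p) (height 1, one generator), or P strictly contains (p). In the
  last case the chain 0 < (p) < P together with dimension 2 shows that P has height 2 and is
  maximal. By finite character p lies in only finitely many maximal ideals, so some b in P lies
  neither in (p) nor in any other maximal ideal containing p; then P is the only prime containing
  (p, b), whence P is the radical of (p, b). One generator does not suffice: if P were the
  radical of (a), a prime factor q of a lying in P would give P = (q), a prime of height 1.
\<close>

lemma ideal_zero: "is_ideal I \<Longrightarrow> 0 \<in> I"
  unfolding is_ideal_def by blast

lemma ideal_add: "is_ideal I \<Longrightarrow> x \<in> I \<Longrightarrow> y \<in> I \<Longrightarrow> x + y \<in> I"
  unfolding is_ideal_def by blast

lemma ideal_mult_left: "is_ideal I \<Longrightarrow> x \<in> I \<Longrightarrow> r * x \<in> I"
  unfolding is_ideal_def by blast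

lemma ideal_mult_right: "is_ideal I \<Longrightarrow> x \<in> I \<Longrightarrow> x * r \<in> I"
  using ideal_mult_left[of I x r] by (simp add: mult.commute)

lemma ideal_diff: "is_ideal I \<Longrightarrow> x \<in> I \<Longrightarrow> y \<in> I \<Longrightarrow> x - y \<in> I"
  using ideal_add[of I x "(- 1) * y"] ideal_mult_left[of I y "- 1"] by simp

lemma ideal_eq_UNIV_iff: "is_ideal I \<Longrightarrow> I = UNIV \<longleftrightarrow> 1 \<in> I"
  using ideal_mult_right[of I 1] by auto

lemma ideal_prod_mem:
  assumes "is_ideal I" "finite A" "a \<in> A" "f a \<in> I"
  shows "prod f A \<in> I"
  using ideal_mult_right[OF assms(1,4), of "prod f (A - {a})"] prod.remove[OF assms(2,3), of f]
  by simp

lemma is_ideal_Union_chain: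
  assumes "C \<noteq> {}" "\<And>X. X \<in> C \<Longrightarrow> is_ideal X"
    and chain: "\<And>X Y. X \<in> C \<Longrightarrow> Y \<in> C \<Longrightarrow> X \<subseteq> Y \<or> Y \<subseteq> X"
  shows "is_ideal (\<Union>C)"
  unfolding is_ideal_def
proof (intro conjI ballI allI)
  show "0 \<in> \<Union>C"
    using assms(1,2) ideal_zero by blast
next
  fix x y assume "x \<in> \<Union>C" "y \<in> \<Union>C"
  then obtain X Y where "x \<in> X" "y \<in> Y" "X \<in> C" "Y \<in> C"
    by blast
  with chain[of X Y] show "x + y \<in> \<Union>C"
    using ideal_add[OF assms(2)[of X]] ideal_add[OF assms(2)[of Y]] by blast
next
  fix r x assume "x \<in> \<Union>C"
  then show "r * x \<in> \<Union>C"
    using assms(2) ideal_mult_left by blast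
qed

lemma prime_ideal_is_ideal: "prime_ideal P \<Longrightarrow> is_ideal P"
  unfolding prime_ideal_def by blast

lemma prime_ideal_one_notin: "prime_ideal P \<Longrightarrow> 1 \<notin> P"
  unfolding prime_ideal_def using ideal_eq_UNIV_iff by blast

lemma prime_ideal_mult: "prime_ideal P \<Longrightarrow> a * b \<in> P \<Longrightarrow> a \<in> P \<or> b \<in> P"
  unfolding prime_ideal_def by blast

lemma prime_ideal_power:
  assumes "prime_ideal P" "x ^ n \<in> P"
  shows "x \<in> P"
  using assms(2)
proof (induction n)
  case 0
  then show ?case
    using prime_ideal_one_notin[OF assms(1)] by simp
next
  case (Suc n)
  then show ?case
    using prime_ideal_mult[OF assms(1), of x "x ^ n"] by auto
qed

lemma prime_ideal_prod_notin:
  assumes "prime_ideal P" "finite A" "\<And>a. a \<in> A \<Longrightarrow> f a \<notin> P"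
  shows "prod f A \<notin> P"
  using assms(2,3)
  by (induction A rule: finite_induct)
     (auto dest: prime_ideal_mult[OF assms(1)] simp: prime_ideal_one_notin[OF assms(1)])

lemma prime_ideal_zero: "prime_ideal {0::'a::idom}"
proof -
  have "(1::'a) \<notin> {0}"
    by simp
  then have "{0::'a} \<noteq> UNIV"
    by (metis UNIV_I)
  then show ?thesis
    unfolding prime_ideal_def is_ideal_def by simp
qed

lemma maximal_ideal_is_ideal: "maximal_ideal M \<Longrightarrow> is_ideal M"
  unfolding maximal_ideal_def by blast

lemma maximal_ideal_one_notin: "maximal_ideal M \<Longrightarrow> 1 \<notin> M"
  unfolding maximal_ideal_def using ideal_eq_UNIV_iff by blast

lemma is_ideal_ideal_gen: "is_ideal (ideal_gen S)"
  unfolding ideal_gen_def is_ideal_def by auto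

lemma ideal_gen_superset: "S \<subseteq> ideal_gen S"
  unfolding ideal_gen_def by auto

lemma ideal_gen_least: "is_ideal J \<Longrightarrow> S \<subseteq> J \<Longrightarrow> ideal_gen S \<subseteq> J"
  unfolding ideal_gen_def by auto

lemma ideal_gen_singleton: "ideal_gen {a} = {x. a dvd x}"
proof
  have "is_ideal {x. a dvd x}"
    unfolding is_ideal_def by auto
  then show "ideal_gen {a} \<subseteq> {x. a dvd x}"
    by (rule ideal_gen_least) simp
  show "{x. a dvd x} \<subseteq> ideal_gen {a}"
    using ideal_mult_right[OF is_ideal_ideal_gen, of a "{a}"] ideal_gen_superset[of "{a}"]
    by (auto elim!: dvdE)
qed

lemma ideal_gen_singleton_eq_zero_iff: "ideal_gen {a} = {0} \<longleftrightarrow> a = 0"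
proof
  show "ideal_gen {a} = {0} \<Longrightarrow> a = 0"
    using ideal_gen_superset[of "{a}"] by blast
  show "a = 0 \<Longrightarrow> ideal_gen {a} = {0}"
    by (simp add: ideal_gen_singleton)
qed

lemma ideal_gen_empty: "ideal_gen {} = {0::'a::comm_ring_1}"
proof
  have "is_ideal {0::'a}"
    unfolding is_ideal_def by simp
  then show "ideal_gen {} \<subseteq> {0::'a}"
    by (rule ideal_gen_least) simp
  show "{0} \<subseteq> ideal_gen ({}::'a set)"
    using ideal_zero[OF is_ideal_ideal_gen] by simp
qed

lemma prime_ideal_ideal_gen_prime:
  fixes p :: "'a::{factorial_semiring,idom}"
  assumes "prime p"
  shows "prime_ideal (ideal_gen {p})"
proof -
  have "ideal_gen {p} \<noteq> UNIV"
    using assms not_prime_unit by (auto simp: ideal_gen_singleton)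
  then show ?thesis
    using assms is_ideal_ideal_gen[of "{p}"]
    by (auto simp: prime_ideal_def ideal_gen_singleton prime_dvd_mult_iff)
qed

lemma radical_mono: "I \<subseteq> J \<Longrightarrow> radical I \<subseteq> radical J"
  unfolding radical_def by auto

lemma radical_superset: "I \<subseteq> radical I"
  unfolding radical_def by (auto intro: exI[of _ 1])

lemma radical_prime_ideal: "prime_ideal P \<Longrightarrow> radical P = P"
  using radical_superset[of P] prime_ideal_power[of P] unfolding radical_def by blast

lemma radical_zero: "radical {0::'a::idom} = {0}"
  unfolding radical_def by auto

subsection \<open>Krull's lemma\<close>

definition ideal_adjoin :: "'a::comm_ring_1 set \<Rightarrow> 'a \<Rightarrow> 'a set" where
  "ideal_adjoin M a = {m + r * a | m r. m \<in> M}"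

lemma is_ideal_adjoin:
  assumes "is_ideal M"
  shows "is_ideal (ideal_adjoin M a)"
  unfolding is_ideal_def
proof (intro conjI ballI allI)
  have "0 = 0 + 0 * a"
    by simp
  then show "0 \<in> ideal_adjoin M a"
    unfolding ideal_adjoin_def using ideal_zero[OF assms] by blast
next
  fix x y assume "x \<in> ideal_adjoin M a" "y \<in> ideal_adjoin M a"
  then obtain m r m' r' where "x = m + r * a" "y = m' + r' * a" "m \<in> M" "m' \<in> M"
    unfolding ideal_adjoin_def by blast
  then have "x + y = (m + m') + (r + r') * a" "m + m' \<in> M"
    using ideal_add[OF assms] by (auto simp: algebra_simps)
  then show "x + y \<in> ideal_adjoin M a"
    unfolding ideal_adjoin_def by blast
next
  fix s x assume "x \<in> ideal_adjoin M a"
  then obtain m r where "x = m + r * a" "m \<in> M"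
    unfolding ideal_adjoin_def by blast
  then have "s * x = s * m + (s * r) * a" "s * m \<in> M"
    using ideal_mult_left[OF assms] by (auto simp: algebra_simps)
  then show "s * x \<in> ideal_adjoin M a"
    unfolding ideal_adjoin_def by blast
qed

lemma ideal_adjoin_superset: "M \<subseteq> ideal_adjoin M a"
  unfolding ideal_adjoin_def by (force intro: exI[of _ 0])

lemma ideal_adjoin_mem: "is_ideal M \<Longrightarrow> a \<in> ideal_adjoin M a"
  unfolding ideal_adjoin_def by (force intro: exI[of _ 1] ideal_zero)

lemma prime_ideal_if_maximal_avoiding_powers:
  assumes M: "is_ideal M" "\<And>n. x ^ n \<notin> M"
    and max: "\<And>a. a \<notin> M \<Longrightarrow> \<exists>n. x ^ n \<in> ideal_adjoin M a"
  shows "prime_ideal M"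
  unfolding prime_ideal_def
proof (intro conjI allI impI)
  show "is_ideal M" "M \<noteq> UNIV"
    using M by auto
next
  fix a b assume ab: "a * b \<in> M"
  show "a \<in> M \<or> b \<in> M"
  proof (rule ccontr)
    assume "\<not> ?thesis"
    then obtain n k where "x ^ n \<in> ideal_adjoin M a" "x ^ k \<in> ideal_adjoin M b"
      using max by blast
    then obtain m1 r1 m2 r2 where
      e: "x ^ n = m1 + r1 * a" "x ^ k = m2 + r2 * b" "m1 \<in> M" "m2 \<in> M"
      unfolding ideal_adjoin_def by blast
    have "x ^ (n + k) = (m1 + r1 * a) * x ^ k"
      by (simp add: power_add e(1))
    also have "\<dots> = m1 * x ^ k + m2 * (r1 * a) + (r1 * r2) * (a * b)"
      by (simp add: e(2) algebra_simps)
    also have "\<dots> \<in> M"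
      using ideal_mult_right[OF M(1) e(3)] ideal_mult_right[OF M(1) e(4)] ideal_mult_left[OF M(1) ab]
      by (intro ideal_add[OF M(1)])
    finally show False
      using M(2) by blast
  qed
qed

lemma prime_ideal_avoiding_powers:
  assumes I: "is_ideal I" and x: "\<And>n. x ^ n \<notin> I"
  shows "\<exists>Q. prime_ideal Q \<and> I \<subseteq> Q \<and> x \<notin> Q"
proof -
  define \<A> where "\<A> = {J. is_ideal J \<and> I \<subseteq> J \<and> (\<forall>n. x ^ n \<notin> J)}"
  have "\<Union>C \<in> \<A>" if "C \<noteq> {}" "subset.chain \<A> C" for C
  proof -
    have C: "C \<subseteq> \<A>" "\<And>X Y. X \<in> C \<Longrightarrow> Y \<in> C \<Longrightarrow> X \<subseteq> Y \<or> Y \<subseteq> X"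
      using that(2) by (auto simp: subset_chain_def)
    then have "is_ideal (\<Union>C)"
      using is_ideal_Union_chain[OF that(1)] unfolding \<A>_def by blast
    with C(1) that(1) show ?thesis
      unfolding \<A>_def by blast
  qed
  moreover have "\<A> \<noteq> {}"
    using I x unfolding \<A>_def by blast
  ultimately obtain M where "M \<in> \<A>" and M_max: "\<forall>X\<in>\<A>. M \<subseteq> X \<longrightarrow> X = M"
    using subset_Zorn_nonempty[of \<A>] by blast
  then have M: "is_ideal M" "I \<subseteq> M" "\<And>n. x ^ n \<notin> M"
    unfolding \<A>_def by auto
  have "\<exists>n. x ^ n \<in> ideal_adjoin M a" if "a \<notin> M" for a
  proof (rule ccontr)
    assume "\<not> ?thesis"
    moreover have "I \<subseteq> ideal_adjoin M a"
      using M(2) ideal_adjoin_superset by (rule order_trans)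
    ultimately have "ideal_adjoin M a \<in> \<A>"
      using is_ideal_adjoin[OF M(1)] unfolding \<A>_def by simp
    then have "ideal_adjoin M a = M"
      using M_max ideal_adjoin_superset[of M a] by blast
    then show False
      using ideal_adjoin_mem[OF M(1), of a] that by simp
  qed
  then have "prime_ideal M"
    using prime_ideal_if_maximal_avoiding_powers M(1,3) by blast
  then show ?thesis
    using M(2) M(3)[of 1] by auto
qed

lemma prime_ideal_superset:
  assumes "is_ideal J" "J \<noteq> UNIV"
  shows "\<exists>Q. prime_ideal Q \<and> J \<subseteq> Q"
  using prime_ideal_avoiding_powers[of J 1] assms ideal_eq_UNIV_iff by auto

lemma radical_eq_unique_minimal_prime:
  assumes "is_ideal I" "prime_ideal P" "I \<subseteq> P"
    and minimal: "\<And>Q. prime_ideal Q \<Longrightarrow> I \<subseteq> Q \<Longrightarrow> P \<subseteq> Q"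
  shows "radical I = P"
proof
  show "radical I \<subseteq> P"
    using radical_mono[OF assms(3)] radical_prime_ideal[OF assms(2)] by simp
  show "P \<subseteq> radical I"
  proof
    fix x assume "x \<in> P"
    show "x \<in> radical I"
    proof (rule ccontr)
      assume "x \<notin> radical I"
      then obtain Q where "prime_ideal Q" "I \<subseteq> Q" "x \<notin> Q"
        using prime_ideal_avoiding_powers[OF assms(1)] unfolding radical_def by blast
      then show False
        using minimal \<open>x \<in> P\<close> by blast
    qed
  qed
qed

lemma prime_ideal_contains_prime_factor:
  fixes x :: "'a::{factorial_semiring,idom}"
  assumes P: "prime_ideal P" and "x \<in> P" "x \<noteq> 0"
  shows "\<exists>q. prime q \<and> q dvd x \<and> q \<in> P"
  using assms(2,3)
proof (induction x rule: prime_divisors_induct)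
  case zero
  then show ?case by simp
next
  case (unit x)
  then have "1 \<in> P"
    using ideal_mult_right[OF prime_ideal_is_ideal[OF P]] by (metis dvdE)
  then show ?case
    using prime_ideal_one_notin[OF P] by blast
next
  case (factor p x)
  show ?case
  proof (cases "p \<in> P")
    case True
    then show ?thesis
      using factor.hyps by auto
  next
    case False
    then have "x \<in> P"
      using factor.prems prime_ideal_mult[OF P] by blast
    then show ?thesis
      using factor.IH factor.prems by (auto intro: dvd_mult_right)
  qed
qed

lemma prime_ideal_psubset_ideal_gen_prime:
  fixes p :: "'a::{factorial_semiring,idom}"
  assumes p: "prime p" and Q: "prime_ideal Q" and psub: "Q \<subset> ideal_gen {p}"
  shows "Q = {0}"
proof (rule ccontr)
  assume "Q \<noteq> {0}"
  then obtain x where "x \<in> Q" "x \<noteq> 0"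
    using ideal_zero[OF prime_ideal_is_ideal[OF Q]] by blast
  then obtain q where q: "prime q" "q \<in> Q"
    using prime_ideal_contains_prime_factor[OF Q] by blast
  then have "p dvd q"
    using psub by (auto simp: ideal_gen_singleton)
  then have "p = q"
    using primes_dvd_imp_eq p q(1) by blast
  then have "ideal_gen {p} \<subseteq> Q"
    using ideal_gen_least[OF prime_ideal_is_ideal[OF Q]] q(2) by blast
  with psub show False
    by blast
qed

lemma prime_radical_of_principal_is_principal:
  fixes a :: "'a::{factorial_semiring,idom}"
  assumes P: "prime_ideal P" and P_eq: "P = radical (ideal_gen {a})" and "P \<noteq> {0}"
  shows "\<exists>q. prime q \<and> P = ideal_gen {q}"
proof -
  have "a \<noteq> 0"
  proof
    assume "a = 0"
    then have "P = {0}"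
      using P_eq radical_zero ideal_gen_singleton_eq_zero_iff by metis
    with assms(3) show False ..
  qed
  moreover have "a \<in> P"
    using P_eq radical_superset ideal_gen_superset by blast
  ultimately obtain q where q: "prime q" "q dvd a" "q \<in> P"
    using prime_ideal_contains_prime_factor[OF P] by blast
  have "ideal_gen {a} \<subseteq> ideal_gen {q}"
    using q(2) by (auto simp: ideal_gen_singleton intro: dvd_trans)
  then have "P \<subseteq> ideal_gen {q}"
    using P_eq radical_mono radical_prime_ideal[OF prime_ideal_ideal_gen_prime[OF q(1)]] by blast
  moreover have "ideal_gen {q} \<subseteq> P"
    using ideal_gen_least[OF prime_ideal_is_ideal[OF P]] q(3) by blast
  ultimately show ?thesis
    using q(1) by blast
qed

subsection \<open>Heights of prime ideals\<close>

lemma prime_chain_snoc: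
  assumes "prime_chain n f" "prime_ideal Q" "f n \<subset> Q"
  shows "prime_chain (Suc n) (f(Suc n := Q))"
  using assms unfolding prime_chain_def by (auto simp: less_Suc_eq le_Suc_eq)

lemma prime_chain_ideal_gen_prime:
  fixes p :: "'a::{factorial_semiring,idom}"
  assumes p: "prime p"
  shows "prime_chain 1 ((\<lambda>_. {0})(1 := ideal_gen {p}))"
proof -
  have "prime_chain 0 (\<lambda>_. {0::'a})"
    unfolding prime_chain_def using prime_ideal_zero by simp
  moreover have "ideal_gen {p} \<noteq> {0}"
    using p by (simp add: ideal_gen_singleton_eq_zero_iff)
  then have "{0} \<subset> ideal_gen {p}"
    using ideal_zero[OF is_ideal_ideal_gen, of "{p}"] by blast
  ultimately show ?thesis
    using prime_chain_snoc[of 0] prime_ideal_ideal_gen_prime[OF p] by simp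
qed

lemma prime_chain_through_ideal_gen_prime:
  fixes p :: "'a::{factorial_semiring,idom}"
  assumes "prime p" "prime_ideal Q" "ideal_gen {p} \<subset> Q"
  shows "prime_chain 2 ((\<lambda>_. {0})(1 := ideal_gen {p}, 2 := Q))"
  using prime_chain_snoc[OF prime_chain_ideal_gen_prime[OF assms(1)] assms(2)] assms(3)
  by (simp add: numeral_2_eq_2)

lemma prime_chain_Suc_nonzero:
  assumes "prime_chain n f" "i < n"
  shows "f (Suc i) \<noteq> {0}"
proof -
  have "f i \<subset> f (Suc i)" "prime_ideal (f i)"
    using assms(1) assms(2) less_imp_le[OF assms(2)] unfolding prime_chain_def by blast+
  moreover have "0 \<in> f i"
    using ideal_zero[OF prime_ideal_is_ideal] \<open>prime_ideal (f i)\<close> .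
  ultimately show ?thesis
    by auto
qed

lemma prime_chain_le_krull_dim:
  "prime_chain n (f :: nat \<Rightarrow> 'a::comm_ring_1 set) \<Longrightarrow> enat n \<le> krull_dim TYPE('a)"
  unfolding krull_dim_def by (rule Sup_upper) blast

lemma prime_chain_le_prime_height: "prime_chain n f \<Longrightarrow> enat n \<le> prime_height (f n)"
  unfolding prime_height_def by (rule Sup_upper) blast

lemma prime_height_leI:
  "(\<And>n f. prime_chain n f \<Longrightarrow> f n = P \<Longrightarrow> n \<le> k) \<Longrightarrow> prime_height P \<le> enat k"
  unfolding prime_height_def by (rule Sup_least) auto

lemma prime_height_le_krull_dim:
  "prime_height (P :: 'a::comm_ring_1 set) \<le> krull_dim TYPE('a)"
  unfolding prime_height_def krull_dim_def by (rule Sup_subset_mono) blast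

lemma prime_height_mono:
  assumes "prime_ideal Q" "P \<subseteq> Q"
  shows "prime_height P \<le> prime_height Q"
  unfolding prime_height_def[of P]
proof (rule Sup_least)
  fix k assume "k \<in> {enat n | n. \<exists>f. prime_chain n f \<and> f n = P}"
  then obtain n f where k: "k = enat n" and f: "prime_chain n f" "f n = P"
    by blast
  \<comment> \<open>replacing the top of the chain by Q keeps it strictly increasing\<close>
  have "prime_chain n (f(n := Q))"
    using f assms unfolding prime_chain_def by (auto dest: psubset_subset_trans)
  from prime_chain_le_prime_height[OF this] show "k \<le> prime_height Q"
    unfolding k by simp
qed

lemma ideal_height_prime_ideal: "prime_ideal P \<Longrightarrow> ideal_height P = prime_height P"
  unfolding ideal_height_def
  by (rule antisym) (auto intro!: Inf_lower Inf_greatest prime_height_mono)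

lemma prime_height_zero: "prime_height {0::'a::idom} = 0"
proof -
  have "prime_height {0::'a} \<le> enat 0"
  proof (rule prime_height_leI)
    fix n f assume "prime_chain n f" "f n = {0::'a}"
    then show "n \<le> 0"
      using prime_chain_Suc_nonzero[of n f "n - 1"] by (cases n) auto
  qed
  then show ?thesis
    by (simp add: zero_enat_def[symmetric])
qed

lemma prime_height_ideal_gen_prime:
  fixes p :: "'a::{factorial_semiring,idom}"
  assumes p: "prime p"
  shows "prime_height (ideal_gen {p}) = 1"
proof (rule antisym)
  show "prime_height (ideal_gen {p}) \<le> 1"
    unfolding one_enat_def
  proof (rule prime_height_leI)
    fix n f assume f: "prime_chain n f" "f n = ideal_gen {p}"
    show "n \<le> 1"
    proof (rule ccontr)
      assume "\<not> n \<le> 1"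
      define m where "m = n - 2"
      have n: "n = Suc (Suc m)"
        using \<open>\<not> n \<le> 1\<close> unfolding m_def by arith
      have "f (Suc m) \<subset> f (Suc (Suc m))" "prime_ideal (f (Suc m))"
        using f(1) unfolding prime_chain_def n by simp_all
      then have "f (Suc m) = {0}"
        using prime_ideal_psubset_ideal_gen_prime[OF p, of "f (Suc m)"] f(2) n by simp
      then show False
        using prime_chain_Suc_nonzero[OF f(1), of m] n by simp
    qed
  qed
  show "1 \<le> prime_height (ideal_gen {p})"
    using prime_chain_le_prime_height[OF prime_chain_ideal_gen_prime[OF p]] by (simp add: one_enat_def)
qed

lemma prime_height_above_ideal_gen_prime:
  fixes p :: "'a::{factorial_semiring,idom}"
  assumes "krull_dim TYPE('a) = 2" "prime p" "prime_ideal Q" "ideal_gen {p} \<subset> Q"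
  shows "prime_height Q = 2"
proof (rule antisym)
  show "prime_height Q \<le> 2"
    using prime_height_le_krull_dim[of Q] assms(1) by simp
  show "2 \<le> prime_height Q"
    using prime_chain_le_prime_height[OF prime_chain_through_ideal_gen_prime[OF assms(2-4)]]
    by (simp add: numeral_eq_enat)
qed

lemma maximal_ideal_above_ideal_gen_prime:
  fixes p :: "'a::{factorial_semiring,idom}"
  assumes kd: "krull_dim TYPE('a) = 2" and "prime p" "prime_ideal Q" "ideal_gen {p} \<subset> Q"
  shows "maximal_ideal Q"
  unfolding maximal_ideal_def
proof (intro conjI allI impI)
  show "is_ideal Q" "Q \<noteq> UNIV"
    using assms(3) unfolding prime_ideal_def by auto
next
  fix J assume J: "is_ideal J \<and> Q \<subseteq> J"
  show "J = Q \<or> J = UNIV"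
  proof (rule ccontr)
    assume "\<not> ?thesis"
    then obtain Q' where Q': "prime_ideal Q'" "J \<subseteq> Q'" "Q \<subset> Q'"
      using prime_ideal_superset J by blast
    have "prime_chain 3 ((\<lambda>_. {0})(1 := ideal_gen {p}, 2 := Q, 3 := Q'))"
      using prime_chain_snoc[OF prime_chain_through_ideal_gen_prime[OF assms(2-4)] Q'(1)] Q'(3)
      by (simp add: numeral_3_eq_3 numeral_2_eq_2)
    from prime_chain_le_krull_dim[OF this] kd show False
      by (simp add: numeral_eq_enat)
  qed
qed

subsection \<open>Arithmetical rank\<close>

definition arith_rank :: "'a::comm_ring_1 set \<Rightarrow> enat" where
  "arith_rank I = Inf {enat n | n. \<exists>\<theta>::nat \<Rightarrow> 'a. radical I = radical (ideal_gen (\<theta> ` {..<n}))}"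

lemma radically_perfect_iff:
  "radically_perfect I \<longleftrightarrow> ideal_height I = arith_rank I \<and>
     (ideal_height I = 0 \<longrightarrow> (\<exists>\<theta>. zero_divisor \<theta> \<and> radical I = radical (ideal_gen {\<theta>})))"
  unfolding radically_perfect_def arith_rank_def ..

lemma arith_rank_le_card:
  assumes "finite S" "radical I = radical (ideal_gen S)"
  shows "arith_rank I \<le> enat (card S)"
proof -
  obtain \<theta> where "bij_betw \<theta> {0..<card S} S"
    using ex_bij_betw_nat_finite[OF assms(1)] ..
  then have "\<theta> ` {..<card S} = S"
    by (simp add: bij_betw_def lessThan_atLeast0)
  then have "radical I = radical (ideal_gen (\<theta> ` {..<card S}))"
    using assms(2) by simp
  then show ?thesis
    unfolding arith_rank_def by (intro Inf_lower) blast
qed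

lemma arith_rank_geI:
  assumes "\<And>S. finite S \<Longrightarrow> card S < k \<Longrightarrow> radical I \<noteq> radical (ideal_gen S)"
  shows "enat k \<le> arith_rank I"
  unfolding arith_rank_def
proof (rule Inf_greatest)
  fix m assume "m \<in> {enat n | n. \<exists>\<theta>::nat \<Rightarrow> 'a. radical I = radical (ideal_gen (\<theta> ` {..<n}))}"
  then obtain n and \<theta> :: "nat \<Rightarrow> 'a"
    where m: "m = enat n" and eq: "radical I = radical (ideal_gen (\<theta> ` {..<n}))"
    by blast
  have "card (\<theta> ` {..<n}) \<le> n"
    using card_image_le[of "{..<n}" \<theta>] by simp
  then have "\<not> n < k"
    using assms[of "\<theta> ` {..<n}"] eq by auto
  then show "enat k \<le> m"
    using m by simp
qed

subsection \<open>Primes strictly above a principal prime\<close>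

lemma maximal_ideals_separation:
  assumes P: "prime_ideal P" "maximal_ideal P" and "finite \<M>"
    and \<M>: "\<And>M. M \<in> \<M> \<Longrightarrow> maximal_ideal M \<and> M \<noteq> P"
  shows "\<exists>c e. c \<in> P \<and> e \<notin> P \<and> (\<forall>M\<in>\<M>. c \<notin> M \<and> e \<in> M)"
proof -
  have "\<exists>m. m \<in> M \<and> m \<notin> P" if "M \<in> \<M>" for M
    using \<M>[OF that] P(2) unfolding maximal_ideal_def by blast
  then obtain m where m: "\<And>M. M \<in> \<M> \<Longrightarrow> m M \<in> M \<and> m M \<notin> P"
    by metis
  define e where "e = (\<Prod>M\<in>\<M>. m M)"
  have e_notin: "e \<notin> P"
    unfolding e_def using prime_ideal_prod_notin[OF P(1) \<open>finite \<M>\<close>] m by blast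
  have e_mem: "e \<in> M" if "M \<in> \<M>" for M
    unfolding e_def
    using ideal_prod_mem[OF maximal_ideal_is_ideal \<open>finite \<M>\<close> that] \<M>[OF that] m[OF that] by blast
  have "ideal_adjoin P e = UNIV"
    using P(2) is_ideal_adjoin ideal_adjoin_superset ideal_adjoin_mem e_notin
    unfolding maximal_ideal_def by metis
  then obtain c r where cr: "1 = c + r * e" "c \<in> P"
    unfolding ideal_adjoin_def by blast
  have "c \<notin> M" if "M \<in> \<M>" for M
  proof
    assume "c \<in> M"
    have "is_ideal M"
      using \<M>[OF that] maximal_ideal_is_ideal by blast
    then have "c + r * e \<in> M"
      using \<open>c \<in> M\<close> e_mem[OF that] ideal_add ideal_mult_left by blast
    then show False
      using cr(1) maximal_ideal_one_notin \<M>[OF that] by metis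
  qed
  then show ?thesis
    using cr(2) e_notin e_mem by blast
qed

lemma ex_mem_avoiding_prime_and_maximals:
  assumes P: "prime_ideal P" "maximal_ideal P" and R: "prime_ideal R" "R \<subset> P"
    and "finite \<M>" "\<And>M. M \<in> \<M> \<Longrightarrow> maximal_ideal M \<and> M \<noteq> P"
  shows "\<exists>b\<in>P. b \<notin> R \<and> (\<forall>M\<in>\<M>. b \<notin> M)"
proof -
  obtain c e where ce: "c \<in> P" "e \<notin> P" "\<forall>M\<in>\<M>. c \<notin> M \<and> e \<in> M"
    using maximal_ideals_separation[OF P assms(5,6)] by blast
  obtain d where d: "d \<in> P" "d \<notin> R"
    using R(2) by blast
  have "e \<notin> R"
    using ce(2) R(2) by blast
  \<comment> \<open>d e lies in every M of \<M> but not in R: adding it keeps c outside each M and moves it out of R\<close>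
  define b where "b = (if c \<in> R then c + d * e else c)"
  have "d * e \<in> P"
    using ideal_mult_right[OF prime_ideal_is_ideal[OF P(1)] d(1)] .
  then have "b \<in> P"
    using ideal_add[OF prime_ideal_is_ideal[OF P(1)] ce(1)] ce(1) unfolding b_def by simp
  moreover have "b \<notin> R"
  proof
    assume "b \<in> R"
    show False
    proof (cases "c \<in> R")
      case True
      then have "c + d * e \<in> R"
        using \<open>b \<in> R\<close> unfolding b_def by simp
      from ideal_diff[OF prime_ideal_is_ideal[OF R(1)] this True] have "d * e \<in> R"
        by simp
      then show False
        using prime_ideal_mult[OF R(1), of d e] d(2) \<open>e \<notin> R\<close> by simp
    next
      case False
      then show False
        using \<open>b \<in> R\<close> unfolding b_def by simp
    qed
  qed
  moreover have "b \<notin> M" if "M \<in> \<M>" for M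
  proof -
    have "is_ideal M"
      using that assms(6) maximal_ideal_is_ideal by blast
    moreover have "c \<notin> M" "d * e \<in> M"
      using ce(3) that ideal_mult_left[OF \<open>is_ideal M\<close>] by auto
    ultimately have "c + d * e \<notin> M"
      using ideal_diff[of M "c + d * e" "d * e"] by auto
    then show ?thesis
      unfolding b_def using \<open>c \<notin> M\<close> by simp
  qed
  ultimately show ?thesis
    by blast
qed

lemma radical_two_generated_above_ideal_gen_prime:
  fixes P :: "'a::{factorial_semiring,idom} set"
  assumes fc: "finite_character TYPE('a)" and kd: "krull_dim TYPE('a) = 2"
    and p: "prime p" and P: "prime_ideal P" and psub: "ideal_gen {p} \<subset> P"
  shows "\<exists>b. radical (ideal_gen {p, b}) = P"
proof -
  define \<M> where "\<M> = {M. maximal_ideal M \<and> p \<in> M} - {P}"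
  have "maximal_ideal P"
    using maximal_ideal_above_ideal_gen_prime[OF kd p P psub] .
  moreover have "finite \<M>"
    using fc p unfolding finite_character_def \<M>_def by auto
  moreover have "\<And>M. M \<in> \<M> \<Longrightarrow> maximal_ideal M \<and> M \<noteq> P"
    unfolding \<M>_def by blast
  ultimately obtain b where b: "b \<in> P" "b \<notin> ideal_gen {p}" "\<forall>M\<in>\<M>. b \<notin> M"
    using ex_mem_avoiding_prime_and_maximals[OF P _ prime_ideal_ideal_gen_prime[OF p] psub] by blast
  have "p \<in> P"
    using psub ideal_gen_superset[of "{p}"] by blast
  have "radical (ideal_gen {p, b}) = P"
  proof (rule radical_eq_unique_minimal_prime[OF is_ideal_ideal_gen P])
    show "ideal_gen {p, b} \<subseteq> P"
      using \<open>p \<in> P\<close> b(1) by (intro ideal_gen_least[OF prime_ideal_is_ideal[OF P]]) simp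
    fix Q assume Q: "prime_ideal Q" "ideal_gen {p, b} \<subseteq> Q"
    then have "p \<in> Q" "b \<in> Q"
      using ideal_gen_superset[of "{p, b}"] by auto
    have "ideal_gen {p} \<subseteq> Q"
      using \<open>p \<in> Q\<close> by (intro ideal_gen_least[OF prime_ideal_is_ideal[OF Q(1)]]) simp
    then have "ideal_gen {p} \<subset> Q"
      using \<open>b \<in> Q\<close> b(2) by blast
    then have "maximal_ideal Q"
      by (rule maximal_ideal_above_ideal_gen_prime[OF kd p Q(1)])
    moreover have "Q \<notin> \<M>"
      using b(3) \<open>b \<in> Q\<close> by blast
    ultimately show "P \<subseteq> Q"
      using \<open>p \<in> Q\<close> unfolding \<M>_def by blast
  qed
  then show ?thesis ..
qed

lemma radically_perfect_zero: "radically_perfect {0::'a::idom}"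
proof -
  have height: "ideal_height {0::'a} = 0"
    by (simp add: ideal_height_prime_ideal[OF prime_ideal_zero] prime_height_zero)
  have "arith_rank {0::'a} \<le> enat (card {})"
    using arith_rank_le_card[of "{}" "{0::'a}"] by (simp add: ideal_gen_empty)
  then have "arith_rank {0::'a} = 0"
    by (simp add: zero_enat_def[symmetric])
  moreover have "zero_divisor (0::'a)"
    unfolding zero_divisor_def by (intro exI[of _ 1]) simp
  moreover have "radical {0::'a} = radical (ideal_gen {0})"
    by (simp add: ideal_gen_singleton)
  ultimately show ?thesis
    unfolding radically_perfect_iff using height by auto
qed

lemma radically_perfect_ideal_gen_prime:
  fixes p :: "'a::{factorial_semiring,idom}"
  assumes p: "prime p"
  shows "radically_perfect (ideal_gen {p})"
proof -
  have height: "ideal_height (ideal_gen {p}) = 1"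
    using ideal_height_prime_ideal[OF prime_ideal_ideal_gen_prime[OF p]]
      prime_height_ideal_gen_prime[OF p] by simp
  have "arith_rank (ideal_gen {p}) \<le> enat (card {p})"
    by (rule arith_rank_le_card) simp_all
  moreover have "enat 1 \<le> arith_rank (ideal_gen {p})"
  proof (rule arith_rank_geI)
    fix S :: "'a set" assume "finite S" "card S < 1"
    then have "S = {}"
      by simp
    moreover have "ideal_gen {p} \<noteq> {0}"
      using p by (simp add: ideal_gen_singleton_eq_zero_iff)
    ultimately show "radical (ideal_gen {p}) \<noteq> radical (ideal_gen S)"
      using radical_prime_ideal[OF prime_ideal_ideal_gen_prime[OF p]]
      by (simp add: ideal_gen_empty radical_zero)
  qed
  ultimately have "arith_rank (ideal_gen {p}) = 1"
    by (simp add: one_enat_def)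
  then show ?thesis
    unfolding radically_perfect_iff using height by simp
qed

lemma radically_perfect_above_ideal_gen_prime:
  fixes P :: "'a::{factorial_semiring,idom} set"
  assumes fc: "finite_character TYPE('a)" and kd: "krull_dim TYPE('a) = 2"
    and p: "prime p" and P: "prime_ideal P" and psub: "ideal_gen {p} \<subset> P"
  shows "radically_perfect P"
proof -
  have height: "ideal_height P = 2"
    using ideal_height_prime_ideal[OF P] prime_height_above_ideal_gen_prime[OF kd p P psub] by simp
  obtain b where b: "radical (ideal_gen {p, b}) = P"
    using radical_two_generated_above_ideal_gen_prime[OF fc kd p P psub] by blast
  have "arith_rank P \<le> enat (card {p, b})"
    using arith_rank_le_card[of "{p, b}" P] b radical_prime_ideal[OF P] by simp
  also have "\<dots> \<le> 2"
    by (simp add: card_insert_if numeral_eq_enat)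
  finally have "arith_rank P \<le> 2" .
  moreover have "enat 2 \<le> arith_rank P"
  proof (rule arith_rank_geI)
    fix S :: "'a set" assume S: "finite S" "card S < 2"
    show "radical P \<noteq> radical (ideal_gen S)"
    proof
      assume eq: "radical P = radical (ideal_gen S)"
      have "P \<noteq> {0}"
        using psub ideal_zero[OF is_ideal_ideal_gen, of "{p}"] by blast
      then have "S \<noteq> {}"
        using eq radical_prime_ideal[OF P] by (auto simp: ideal_gen_empty radical_zero)
      then have "card S = 1"
        using S by (simp add: less_2_cases_iff)
      then obtain a where "S = {a}"
        by (rule card_1_singletonE)
      then obtain q where "prime q" "P = ideal_gen {q}"
        using prime_radical_of_principal_is_principal[OF P] eq radical_prime_ideal[OF P] \<open>P \<noteq> {0}\<close> by metis
      then have "ideal_gen {p} = {0}"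
        using prime_ideal_psubset_ideal_gen_prime prime_ideal_ideal_gen_prime[OF p] psub by metis
      then show False
        using p by (simp add: ideal_gen_singleton_eq_zero_iff)
    qed
  qed
  ultimately have "arith_rank P = 2"
    by (simp add: numeral_eq_enat)
  then show ?thesis
    unfolding radically_perfect_iff using height by simp
qed

theorem proposition4p1:
  fixes P :: "'a::{factorial_semiring, idom} set"
  assumes "finite_character TYPE('a)"
    and "krull_dim TYPE('a) = 2"
    and "prime_ideal P"
  shows "radically_perfect P"
proof (cases "P = {0}")
  case True
  then show ?thesis
    using radically_perfect_zero by simp
next
  case False
  then obtain x where "x \<in> P" "x \<noteq> 0"
    using ideal_zero[OF prime_ideal_is_ideal[OF assms(3)]] by blast
  then obtain p where p: "prime p" "p \<in> P"
    using prime_ideal_contains_prime_factor[OF assms(3)] by blast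
  then have "ideal_gen {p} \<subseteq> P"
    using ideal_gen_least[OF prime_ideal_is_ideal[OF assms(3)]] by blast
  then consider "ideal_gen {p} = P" | "ideal_gen {p} \<subset> P"
    by blast
  then show ?thesis
  proof cases
    case 1
    then show ?thesis
      using radically_perfect_ideal_gen_prime[OF p(1)] by simp
  next
    case 2
    then show ?thesis
      by (rule radically_perfect_above_ideal_gen_prime[OF assms(1,2) p(1) assms(3)])
  qed
qed

end
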